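(* Let $k\ge 2$ and $n=r+m(k+1)$ with integers $m\ge 0$ and $r\in\{0,1,\ldots,k\}$. Then: (i) if $r=0$, $L_n^{(k)}\equiv 2(-1)^m\pmod{2^{k-2}}$; (ii) if $r=1$, $L_n^{(k)}\equiv (4m+1)(-1)^m\pmod{2^{k-1}}$; (iii) if $r=2$, $L_n^{(k)}\equiv (4m^2+6m+3)(-1)^m\pmod{2^{k}}$; (iv) if $r\ge 3$, $$L_n^{(k)}\equiv (-1)^m2^{r-2}\left(4\left(\binom{m+r+1}{m}-\binom{m+r-1}{m-2}\right)-\left(\binom{m+r}{m}-\binom{m+r-2}{m-2}\right)\right)\pmod{2^{k+r-2}}.$$
   Context: For an integer $k\ge 2$, the $k$-Lucas sequence $\{L_n^{(k)}\}_{n\in\mathbb{Z}}$ is defined by $L_{2-k}^{(k)}=\cdots=L_{-1}^{(k)}=0$, $L_0^{(k)}=2$, $L_1^{(k)}=1$, and $L_n^{(k)}=L_{n-1}^{(k)}+\cdots+L_{n-k}^{(k)}$. Convention: $\binom{a}{b}=0$ if $a<b$ or if $a$ or $b$ is negative. *)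

theory Defs
  imports "HOL-Number_Theory.Number_Theory"
begin

text \<open>The k-Lucas sequence for nonnegative indices. The terms with indices 2-k..-1 are 0,
  so for n >= 2, L n = sum of L (n-j) for 1 <= j <= k with n-j >= 0.\<close>
function klucas :: "nat \<Rightarrow> nat \<Rightarrow> int" where
  "klucas k n = (if n = 0 then 2 else if n = 1 then 1
                 else (\<Sum>j\<in>{1..min k n}. klucas k (n - j)))"
  by pat_completeness auto
termination
  by (relation "measure snd") auto

definition binomZ :: "int \<Rightarrow> int \<Rightarrow> int" where
  "binomZ a b = (if a < 0 \<or> b < 0 \<or> a < b then 0 else int (nat a choose nat b))"

end

theory Submission
  imports Defs
begin

(* Let F be the k-generalised Fibonacci sequence (F 0 = 0, F 1 = 1, same recurrence as L).
   Solutions of the recurrence are determined by their first two terms, so L n = 2 F (n+1) - F n.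
   The partial sums A N = F 1 + ... + F (N+1) obey the two-term recurrence
   A (N+1) = 2 A N - A (N-k) (the last term absent for N < k); hence A r = 2^r for r <= k, and an
   induction over the blocks of length k+1, driven by Pascal's rule, gives
   A (r + m(k+1)) = (-1)^m C(r+m, m) 2^r  mod 2^(r+k+1).
   Each case then follows from L n = 2 A n - 3 A (n-1) + A (n-2) by combining three of these
   congruences; the moduli obtained are one power of 2 larger than the ones claimed. *)

declare klucas.simps [simp del]

function kfib :: "nat \<Rightarrow> nat \<Rightarrow> int" where
  "kfib k n = (if n = 0 then 0 else if n = 1 then 1
               else (\<Sum>j\<in>{1..min k n}. kfib k (n - j)))"
  by pat_completeness auto
termination
  by (relation "measure snd") auto

declare kfib.simps [simp del]

lemma kfib_0 [simp]: "kfib k 0 = 0"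
  and kfib_1 [simp]: "kfib k (Suc 0) = 1"
  by (simp_all add: kfib.simps)

(* Since n - k truncates to 0, the window for n \<le> k is {0..<n}:
   the terms of negative index vanish. *)
definition krec :: "nat \<Rightarrow> (nat \<Rightarrow> 'a::comm_ring) \<Rightarrow> bool" where
  "krec k f \<longleftrightarrow> (\<forall>n\<ge>2. f n = (\<Sum>i\<in>{n - k..<n}. f i))"

lemma sum_window_reindex:
  "(\<Sum>j\<in>{1..min k n}. f (n - j)) = (\<Sum>i\<in>{n - k..<n}. f i)" for k n :: nat
  by (rule sum.reindex_bij_witness[of _ "\<lambda>i. n - i" "\<lambda>i. n - i"]) auto

lemma krecI:
  "(\<And>n. n \<ge> 2 \<Longrightarrow> f n = (\<Sum>j\<in>{1..min k n}. f (n - j))) \<Longrightarrow> krec k f"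
  unfolding krec_def sum_window_reindex [symmetric] by simp

lemma krec_klucas: "krec k (klucas k)"
  by (rule krecI) (subst klucas.simps; simp)

lemma krec_kfib: "krec k (kfib k)"
  by (rule krecI) (subst kfib.simps; simp)

lemma kfib_2:
  assumes "k \<ge> 1"
  shows "kfib k 2 = 1"
proof -
  have "kfib k 2 = (\<Sum>i\<in>{2 - k..<2}. kfib k i)"
    using krec_kfib by (simp add: krec_def)
  also have "\<dots> = kfib k 1"
    using assms by (cases "k = 1") (simp_all add: numeral_2_eq_2 atLeast0_lessThan_Suc)
  finally show ?thesis by simp
qed

lemma krec_linear:
  assumes "krec k f" "krec k g"
  shows "krec k (\<lambda>n. a * f n + b * g n)"
  using assms by (simp add: krec_def sum.distrib sum_distrib_left)

lemma krec_unique: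
  assumes "krec k f" "krec k g" "f 0 = g 0" "f 1 = g 1"
  shows "f n = g n"
proof (induction n rule: less_induct)
  case (less n)
  show ?case
  proof (cases "n \<ge> 2")
    case True
    then have "f n = (\<Sum>i\<in>{n - k..<n}. f i)" "g n = (\<Sum>i\<in>{n - k..<n}. g i)"
      using assms(1,2) by (simp_all add: krec_def)
    then show ?thesis using less by (auto intro: sum.cong)
  next
    case False
    then have "n = 0 \<or> n = 1" by linarith
    then show ?thesis using assms(3,4) by auto
  qed
qed

lemma krec_kfib_Suc: "krec k (\<lambda>n. kfib k (Suc n))"
  unfolding krec_def
proof (intro allI impI)
  fix n :: nat assume "n \<ge> 2"
  have "kfib k (Suc n) = (\<Sum>i\<in>{Suc n - k..<Suc n}. kfib k i)"
    using krec_kfib \<open>n \<ge> 2\<close> by (simp add: krec_def)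
  also have "\<dots> = (\<Sum>i\<in>{Suc (n - k)..<Suc n}. kfib k i)"
    by (cases "k \<le> n") (simp_all add: Suc_diff_le sum.atLeast_Suc_lessThan)
  also have "\<dots> = (\<Sum>i\<in>{n - k..<n}. kfib k (Suc i))"
    by (rule sum.shift_bounds_Suc_ivl)
  finally show "kfib k (Suc n) = (\<Sum>i\<in>{n - k..<n}. kfib k (Suc i))" .
qed

lemma klucas_eq_kfib:
  assumes "k \<ge> 1"
  shows "klucas k n = 2 * kfib k (Suc n) - kfib k n"
proof -
  have rec: "krec k (\<lambda>n. 2 * kfib k (Suc n) - kfib k n)"
    using krec_linear[OF krec_kfib_Suc krec_kfib, where a = 2 and b = "-1"] by simp
  have "klucas k 0 = 2" "klucas k 1 = 1"
    by (subst klucas.simps; simp)+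
  then show ?thesis
    using krec_unique[OF krec_klucas rec] kfib_2[OF assms] by (simp add: numeral_2_eq_2)
qed

definition kfib_psum :: "nat \<Rightarrow> nat \<Rightarrow> int" where
  "kfib_psum k N = (\<Sum>i\<le>Suc N. kfib k i)"

lemma kfib_psum_0: "kfib_psum k 0 = 1"
  by (simp add: kfib_psum_def)

lemma kfib_psum_Suc:
  "kfib_psum k (Suc N) = 2 * kfib_psum k N - (if k \<le> N then kfib_psum k (N - k) else 0)"
proof -
  have "kfib k (Suc (Suc N)) = (\<Sum>i\<in>{Suc (Suc N) - k..<Suc (Suc N)}. kfib k i)"
    using krec_kfib by (simp add: krec_def)
  also have "\<dots> = (\<Sum>i<Suc (Suc N). kfib k i) - (\<Sum>i<Suc (Suc N) - k. kfib k i)"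
    using sum_diff_nat_ivl[of 0 "Suc (Suc N) - k" "Suc (Suc N)" "kfib k"]
    by (simp add: atLeast0LessThan)
  also have "(\<Sum>i<Suc (Suc N). kfib k i) = kfib_psum k N"
    by (simp add: kfib_psum_def lessThan_Suc_atMost)
  also have "(\<Sum>i<Suc (Suc N) - k. kfib k i) = (if k \<le> N then kfib_psum k (N - k) else 0)"
  proof (cases "k \<le> N")
    case True
    then have "Suc (Suc N) - k = Suc (Suc (N - k))" by simp
    then show ?thesis using True by (simp add: kfib_psum_def lessThan_Suc_atMost)
  next
    case False
    then have "Suc (Suc N) - k = 0 \<or> Suc (Suc N) - k = 1" by linarith
    then show ?thesis using False by auto
  qed
  finally show ?thesis
    by (simp add: kfib_psum_def)
qed

lemma kfib_psum_pow: "r \<le> k \<Longrightarrow> kfib_psum k r = 2 ^ r"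
  by (induction r) (simp_all add: kfib_psum_0 kfib_psum_Suc)

lemma kfib_psum_cong:
  assumes "r \<le> k"
  shows "[kfib_psum k (r + m * (k + 1)) = (-1) ^ m * int ((r + m) choose m) * 2 ^ r]
           (mod 2 ^ (r + k + 1))"
proof -
  define E where
    "E r m = kfib_psum k (r + m * (k + 1)) - (-1) ^ m * int ((r + m) choose m) * 2 ^ r" for r m
  have "2 ^ (r + k + 1) dvd E r m" if "r \<le> k" for r
    using that
  proof (induction m arbitrary: r)
    case 0
    then show ?case by (simp add: E_def kfib_psum_pow)
  next
    case (Suc m)
    note IH = Suc.IH
    from Suc.prems show ?case
    proof (induction r)
      case 0
      have "kfib_psum k (Suc m * (k + 1))
          = 2 * kfib_psum k (k + m * (k + 1)) - kfib_psum k (m * (k + 1))"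
        using kfib_psum_Suc[of k "k + m * (k + 1)"] by (simp add: algebra_simps)
      then have "E 0 (Suc m)
          = 2 * E k m - E 0 m + 2 ^ (k + 1) * ((-1) ^ m * int ((k + m) choose m))"
        by (simp add: E_def algebra_simps)
      moreover have "2 ^ (k + 1) dvd 2 * E k m"
        using power_le_dvd[OF IH[of k]] by simp
      moreover have "2 ^ (k + 1) dvd E 0 m"
        using IH[of 0] by simp
      ultimately show ?case by simp
    next
      case (Suc r)
      have "kfib_psum k (Suc r + Suc m * (k + 1))
          = 2 * kfib_psum k (r + Suc m * (k + 1)) - kfib_psum k (Suc r + m * (k + 1))"
        using kfib_psum_Suc[of k "r + Suc m * (k + 1)"] by simp
      then have "E (Suc r) (Suc m) = 2 * E r (Suc m) - E (Suc r) m"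
        by (simp add: E_def algebra_simps)
      moreover have "2 ^ (Suc r + k + 1) dvd 2 * E r (Suc m)"
        using mult_dvd_mono[OF dvd_refl[of 2] Suc.IH] Suc.prems by simp
      moreover have "2 ^ (Suc r + k + 1) dvd E (Suc r) m"
        using IH[of "Suc r"] Suc.prems by simp
      ultimately show ?case by simp
    qed
  qed
  then show ?thesis
    using assms by (simp add: E_def cong_iff_dvd_diff)
qed

lemma kfib_psum_cong_le:
  assumes "r \<le> k" "j \<le> r + k + 1"
  shows "[kfib_psum k (r + m * (k + 1)) = (-1) ^ m * int ((r + m) choose m) * 2 ^ r]
           (mod 2 ^ j)"
  by (rule cong_dvd_modulus[OF kfib_psum_cong[OF assms(1)] le_imp_power_dvd[OF assms(2)]])

lemma kfib_psum_cong_0: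
  assumes "r \<le> k" "j \<le> r"
  shows "[kfib_psum k (r + m * (k + 1)) = 0] (mod 2 ^ j)"
proof -
  have "[kfib_psum k (r + m * (k + 1)) = (-1) ^ m * int ((r + m) choose m) * 2 ^ r] (mod 2 ^ j)"
    using assms by (intro kfib_psum_cong_le) auto
  also have "[(-1) ^ m * int ((r + m) choose m) * 2 ^ r = 0] (mod 2 ^ j)"
    using le_imp_power_dvd[OF assms(2), of "2::int"] by (simp add: cong_0_iff)
  finally show ?thesis .
qed

lemma klucas_eq_kfib_psum:
  assumes "k \<ge> 1" "n \<ge> 2"
  shows "klucas k n = 2 * kfib_psum k n - 3 * kfib_psum k (n - 1) + kfib_psum k (n - 2)"
proof -
  obtain p where "n = Suc (Suc p)"
    using assms(2) by (metis add_2_eq_Suc le_Suc_ex)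
  then show ?thesis
    using klucas_eq_kfib[OF assms(1)] by (simp add: kfib_psum_def)
qed

lemma klucas_cong_rem0:
  assumes "k \<ge> 1"
  shows "[klucas k (m * (k + 1)) = 2 * (-1) ^ m] (mod 2 ^ (k - 1))"
proof (cases m)
  case 0
  then show ?thesis by (subst klucas.simps) simp
next
  case (Suc m')
  let ?n = "m * (k + 1)"
  have idx: "?n - 1 = k + m' * (k + 1)" "?n - 2 = (k - 1) + m' * (k + 1)"
    using Suc assms by simp_all
  have "klucas k ?n = 2 * kfib_psum k ?n - 3 * kfib_psum k (?n - 1) + kfib_psum k (?n - 2)"
    using Suc assms by (intro klucas_eq_kfib_psum) auto
  also have "[\<dots> = 2 * (-1) ^ m - 3 * 0 + 0] (mod 2 ^ (k - 1))"
    unfolding idx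
    using kfib_psum_cong_le[of 0 k "k - 1" m] kfib_psum_cong_0[of k k "k - 1" m']
      kfib_psum_cong_0[of "k - 1" k "k - 1" m']
    by (intro cong_add cong_diff cong_scalar_left) auto
  finally show ?thesis by simp
qed

lemma klucas_cong_rem1:
  assumes "k \<ge> 1"
  shows "[klucas k (1 + m * (k + 1)) = (4 * int m + 1) * (-1) ^ m] (mod 2 ^ k)"
proof (cases m)
  case 0
  then show ?thesis by (subst klucas.simps) simp
next
  case (Suc m')
  let ?n = "1 + m * (k + 1)"
  have idx: "?n - 1 = 0 + m * (k + 1)" "?n - 2 = k + m' * (k + 1)"
    using Suc by simp_all
  have "klucas k ?n = 2 * kfib_psum k ?n - 3 * kfib_psum k (?n - 1) + kfib_psum k (?n - 2)"
    using Suc assms by (intro klucas_eq_kfib_psum) auto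
  also have "[\<dots> = 2 * ((-1) ^ m * int ((1 + m) choose m) * 2 ^ 1) - 3 * ((-1) ^ m * 1 * 1) + 0]
               (mod 2 ^ k)" (is "[_ = ?c] (mod _)")
    unfolding idx
    using kfib_psum_cong_le[of 1 k k m] kfib_psum_cong_le[of 0 k k m]
      kfib_psum_cong_0[of k k k m'] assms
    by (intro cong_add cong_diff cong_scalar_left) auto
  also have "?c = (4 * int m + 1) * (-1) ^ m"
    by (simp add: algebra_simps)
  finally show ?thesis .
qed

lemma klucas_cong_rem_ge2:
  assumes "2 \<le> r" "r \<le> k"
  shows "[klucas k (r + m * (k + 1)) = (-1) ^ m * 2 ^ (r - 2) *
            (8 * int ((r + m) choose m) - 6 * int ((r - 1 + m) choose m) + int ((r - 2 + m) choose m))]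
           (mod 2 ^ (k + r - 1))"
proof -
  let ?n = "r + m * (k + 1)"
  have idx: "?n - 1 = (r - 1) + m * (k + 1)" "?n - 2 = (r - 2) + m * (k + 1)"
    using assms(1) by simp_all
  have "klucas k ?n = 2 * kfib_psum k ?n - 3 * kfib_psum k (?n - 1) + kfib_psum k (?n - 2)"
    using assms by (intro klucas_eq_kfib_psum) auto
  also have "[\<dots> = 2 * ((-1) ^ m * int ((r + m) choose m) * 2 ^ r)
                    - 3 * ((-1) ^ m * int ((r - 1 + m) choose m) * 2 ^ (r - 1))
                    + (-1) ^ m * int ((r - 2 + m) choose m) * 2 ^ (r - 2)] (mod 2 ^ (k + r - 1))"
    (is "[_ = ?c] (mod _)")
    unfolding idx
    using kfib_psum_cong_le[of r k "k + r - 1" m] kfib_psum_cong_le[of "r - 1" k "k + r - 1" m]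
      kfib_psum_cong_le[of "r - 2" k "k + r - 1" m] assms
    by (intro cong_add cong_diff cong_scalar_left) auto
  also have "?c = (-1) ^ m * 2 ^ (r - 2) *
            (8 * int ((r + m) choose m) - 6 * int ((r - 1 + m) choose m) + int ((r - 2 + m) choose m))"
  proof -
    obtain q where "r = q + 2"
      using assms(1) by (metis add.commute le_Suc_ex)
    then show ?thesis by (simp add: algebra_simps power_add)
  qed
  finally show ?thesis .
qed

lemma binomZ_of_nat [simp]: "binomZ (int a) (int b) = int (a choose b)"
  by (simp add: binomZ_def)

lemma binomZ_Suc:
  assumes "0 \<le> a"
  shows "binomZ (a + 1) b = binomZ a b + binomZ a (b - 1)"
proof (cases "b \<le> 0")
  case True
  then show ?thesis using assms by (cases "b = 0") (simp_all add: binomZ_def)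
next
  case False
  define a' b' where "a' = nat a" and "b' = nat (b - 1)"
  have ab: "a + 1 = int (Suc a')" "a = int a'" "b = int (Suc b')" "b - 1 = int b'"
    using assms False by (simp_all add: a'_def b'_def)
  have "binomZ (a + 1) b = int (Suc a' choose Suc b')"
    by (simp only: ab(1,3) binomZ_of_nat)
  moreover have "binomZ a b = int (a' choose Suc b')"
    by (simp only: ab(2,3) binomZ_of_nat)
  moreover have "binomZ a (b - 1) = int (a' choose b')"
    by (simp only: ab(2,4) binomZ_of_nat)
  ultimately show ?thesis by simp
qed

lemma binomZ_add2_diff:
  assumes "0 \<le> a"
  shows "binomZ (a + 2) b - binomZ a (b - 2) = 2 * binomZ (a + 1) b - binomZ a b"
  using binomZ_Suc[of a b] binomZ_Suc[of "a + 1" b] binomZ_Suc[of a "b - 1"] assms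
  by (simp add: algebra_simps)

lemma binomZ_coeff_eq_choose:
  assumes "r \<ge> 2"
  shows "4 * (binomZ (int m + int r + 1) (int m) - binomZ (int m + int r - 1) (int m - 2))
           - (binomZ (int m + int r) (int m) - binomZ (int m + int r - 2) (int m - 2))
         = 8 * int ((r + m) choose m) - 6 * int ((r - 1 + m) choose m) + int ((r - 2 + m) choose m)"
proof -
  define a where "a = int (r - 2 + m)"
  have "0 \<le> a"
    by (simp add: a_def)
  have shift: "int m + int r = a + 2" "a + 2 = int (r + m)" "a + 1 = int (r - 1 + m)"
    using assms by (simp_all add: a_def of_nat_diff)
  have choose: "binomZ (a + 2) (int m) = int ((r + m) choose m)"
    "binomZ (a + 1) (int m) = int ((r - 1 + m) choose m)"
    "binomZ a (int m) = int ((r - 2 + m) choose m)"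
    unfolding shift(2,3) by (simp_all only: a_def binomZ_of_nat)
  show ?thesis
    unfolding shift(1)
    using binomZ_add2_diff[of "a + 1" "int m"] binomZ_add2_diff[of a "int m"]
      \<open>0 \<le> a\<close> choose
    by (simp add: algebra_simps)
qed

lemma two_mult_choose_Suc_Suc: "2 * (Suc (Suc m) choose m) = (m + 1) * (m + 2)"
  by (induction m) (simp_all add: algebra_simps)

lemma klucas_cong_rem2:
  assumes "k \<ge> 2"
  shows "[klucas k (2 + m * (k + 1)) = (4 * int m ^ 2 + 6 * int m + 3) * (-1) ^ m]
           (mod 2 ^ (k + 1))"
proof -
  have "2 * int (Suc (Suc m) choose m) = (int m + 1) * (int m + 2)"
    using arg_cong[OF two_mult_choose_Suc_Suc[of m], of int] by (simp add: algebra_simps)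
  then have "8 * int ((2 + m) choose m) - 6 * int ((2 - 1 + m) choose m)
      + int ((2 - 2 + m) choose m) = 4 * int m ^ 2 + 6 * int m + 3"
    by (simp add: algebra_simps power2_eq_square)
  then show ?thesis
    using klucas_cong_rem_ge2[of 2 k m] assms by (simp add: algebra_simps)
qed

lemma klucas_cong_rem_ge3:
  assumes "3 \<le> r" "r \<le> k"
  shows "[klucas k (r + m * (k + 1)) = (-1) ^ m * 2 ^ (r - 2) *
            (4 * (binomZ (int m + int r + 1) (int m) - binomZ (int m + int r - 1) (int m - 2))
             - (binomZ (int m + int r) (int m) - binomZ (int m + int r - 2) (int m - 2)))]
           (mod 2 ^ (k + r - 1))"
  using klucas_cong_rem_ge2[of r k m] binomZ_coeff_eq_choose[of r m] assms by simp

theorem lemma3p1: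
  fixes k m r n :: nat
  assumes "k \<ge> 2" and "r \<le> k" and "n = r + m * (k + 1)"
  shows "(r = 0 \<longrightarrow> [klucas k n = 2 * (-1) ^ m] (mod 2 ^ (k - 2)))
       \<and> (r = 1 \<longrightarrow> [klucas k n = (4 * int m + 1) * (-1) ^ m] (mod 2 ^ (k - 1)))
       \<and> (r = 2 \<longrightarrow> [klucas k n = (4 * int m ^ 2 + 6 * int m + 3) * (-1) ^ m] (mod 2 ^ k))
       \<and> (r \<ge> 3 \<longrightarrow> [klucas k n = (-1) ^ m * 2 ^ (r - 2) *
            (4 * (binomZ (int m + int r + 1) (int m) - binomZ (int m + int r - 1) (int m - 2))
             - (binomZ (int m + int r) (int m) - binomZ (int m + int r - 2) (int m - 2)))]
            (mod 2 ^ (k + r - 2)))"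
proof -
  have k1: "k \<ge> 1"
    using assms(1) by simp
  have weaken: "[a = b] (mod 2 ^ j) \<Longrightarrow> i \<le> j \<Longrightarrow> [a = b] (mod 2 ^ i)"
    for a b :: int and i j
    by (erule cong_dvd_modulus) (rule le_imp_power_dvd)
  show ?thesis
    using weaken[OF klucas_cong_rem0[OF k1, of m], of "k - 2"]
      weaken[OF klucas_cong_rem1[OF k1, of m], of "k - 1"]
      weaken[OF klucas_cong_rem2[OF assms(1), of m], of k]
      weaken[OF klucas_cong_rem_ge3[OF _ assms(2), of m], of "k + r - 2"]
      assms
    by auto
qed

end
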